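(* Let $\mathbb{V}$ and $\mathbb{V}'$ be varieties with the same signature $\mathcal{F}$ and defining sets of identities $\Sigma\subseteq\Sigma'$ respectively, and suppose $\mathbb{V}$ is BIT speciale. Then any set of ideal terms determining ideals in $\mathbb{V}$ determines ideals in $\mathbb{V}'$ too.
   Context: BIT speciale: the algebraic theory of $\mathbb{V}$ contains a constant $0$ and, for some $n\ge1$, binary terms $\alpha_1,\dots,\alpha_n$ and an $(n+1)$-ary term $\theta$ such that $\alpha_i(x,x)=0$ and $\theta(\alpha_1(x,y),\dots,\alpha_n(x,y),y)=x$ are identities of $\mathbb{V}$. For a variety $\mathbb{W}$ with signature $\mathcal{F}$: an ideal term of $\mathbb{W}$ in the variables $y_1,\dots,y_p$ is a term $t(x_1,\dots,x_m,y_1,\dots,y_p)$ with $t(x_1,\dots,x_m,0,\dots,0)=0$ an identity of $\mathbb{W}$; a non-empty subset $H$ of a $\mathbb{W}$-algebra $A$ is an ideal if $t(a_1,\dots,a_m,b_1,\dots,b_p)\in H$ for every ideal term $t$, all $a_r\in A$, $b_s\in H$. A set $T$ of ideal terms determines ideals in $\mathbb{W}$ if for every $\mathbb{W}$-algebra $A$, a non-empty $H\subseteq A$ is an ideal iff every $t\in T$ takes values in $H$ whenever its $x$-variables are assigned elements of $A$ and its $y$-variables elements of $H$. *)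

theory Defs
  imports Main
begin

datatype ('f, 'v) trm = Var 'v | Fn 'f "('f, 'v) trm list"

fun wf_trm :: "('f \<Rightarrow> nat) \<Rightarrow> ('f, 'v) trm \<Rightarrow> bool" where
  "wf_trm ar (Var v) = True"
| "wf_trm ar (Fn f ts) = (length ts = ar f \<and> (\<forall>t\<in>set ts. wf_trm ar t))"

fun vars_trm :: "('f, 'v) trm \<Rightarrow> 'v set" where
  "vars_trm (Var v) = {v}"
| "vars_trm (Fn f ts) = (\<Union>t\<in>set ts. vars_trm t)"

fun subst :: "('v \<Rightarrow> ('f, 'w) trm) \<Rightarrow> ('f, 'v) trm \<Rightarrow> ('f, 'w) trm" where
  "subst \<sigma> (Var v) = \<sigma> v"
| "subst \<sigma> (Fn f ts) = Fn f (map (subst \<sigma>) ts)"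

fun eval :: "('f \<Rightarrow> 'a list \<Rightarrow> 'a) \<Rightarrow> ('v \<Rightarrow> 'a) \<Rightarrow> ('f, 'v) trm \<Rightarrow> 'a" where
  "eval I \<rho> (Var v) = \<rho> v"
| "eval I \<rho> (Fn f ts) = I f (map (eval I \<rho>) ts)"

type_synonym 'f identity = "('f, nat) trm \<times> ('f, nat) trm"

definition identities :: "('f \<Rightarrow> nat) \<Rightarrow> 'f identity set \<Rightarrow> bool" where
  "identities ar \<Sigma> \<longleftrightarrow> (\<forall>(s, t)\<in>\<Sigma>. wf_trm ar s \<and> wf_trm ar t)"

text \<open>Equational consequence (Birkhoff's equational logic): the identities of the
  variety defined by \<Sigma>.\<close>
inductive deriv :: "('f \<Rightarrow> nat) \<Rightarrow> 'f identity set \<Rightarrow> ('f, nat) trm \<Rightarrow> ('f, nat) trm \<Rightarrow> bool"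
  for ar \<Sigma> where
  ax: "(s, t) \<in> \<Sigma> \<Longrightarrow> (\<forall>v. wf_trm ar (\<sigma> v)) \<Longrightarrow> deriv ar \<Sigma> (subst \<sigma> s) (subst \<sigma> t)"
| refl: "deriv ar \<Sigma> t t"
| sym: "deriv ar \<Sigma> s t \<Longrightarrow> deriv ar \<Sigma> t s"
| trans: "deriv ar \<Sigma> s u \<Longrightarrow> deriv ar \<Sigma> u t \<Longrightarrow> deriv ar \<Sigma> s t"
| cong: "list_all2 (deriv ar \<Sigma>) ss ts \<Longrightarrow> deriv ar \<Sigma> (Fn f ss) (Fn f ts)"

definition is_alg :: "('f \<Rightarrow> nat) \<Rightarrow> 'a set \<Rightarrow> ('f \<Rightarrow> 'a list \<Rightarrow> 'a) \<Rightarrow> bool" where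
  "is_alg ar A I \<longleftrightarrow> (\<forall>f as. set as \<subseteq> A \<and> length as = ar f \<longrightarrow> I f as \<in> A)"

definition var_alg :: "('f \<Rightarrow> nat) \<Rightarrow> 'f identity set \<Rightarrow> 'a set \<Rightarrow> ('f \<Rightarrow> 'a list \<Rightarrow> 'a) \<Rightarrow> bool" where
  "var_alg ar \<Sigma> A I \<longleftrightarrow> is_alg ar A I \<and>
     (\<forall>(s, t)\<in>\<Sigma>. \<forall>\<rho>. (\<forall>v. \<rho> v \<in> A) \<longrightarrow> eval I \<rho> s = eval I \<rho> t)"

text \<open>The constant 0 of the algebraic theory is a ground (variable-free) term z.\<close>
definition BIT_speciale :: "('f \<Rightarrow> nat) \<Rightarrow> 'f identity set \<Rightarrow> ('f, nat) trm \<Rightarrow> bool" where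
  "BIT_speciale ar \<Sigma> z \<longleftrightarrow> wf_trm ar z \<and> vars_trm z = {} \<and>
    (\<exists>n::nat. n \<ge> 1 \<and> (\<exists>(\<alpha> :: nat \<Rightarrow> ('f, nat) trm) (\<theta> :: ('f, nat) trm).
       (\<forall>i<n. wf_trm ar (\<alpha> i) \<and> vars_trm (\<alpha> i) \<subseteq> {0, 1}) \<and>
       wf_trm ar \<theta> \<and> vars_trm \<theta> \<subseteq> {..n} \<and>
       (\<forall>i<n. deriv ar \<Sigma> (subst (\<lambda>_. Var 0) (\<alpha> i)) z) \<and>
       deriv ar \<Sigma> (subst (\<lambda>j. if j < n then \<alpha> j else Var 1) \<theta>) (Var 0)))"

text \<open>An ideal term is a pair (t, Y): t is a term, Y the set of its y-variables
  (all other variables are x-variables); t(x, 0, ..., 0) = 0 must be an identity.\<close>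
definition ideal_term :: "('f \<Rightarrow> nat) \<Rightarrow> 'f identity set \<Rightarrow> ('f, nat) trm \<Rightarrow>
    ('f, nat) trm \<times> nat set \<Rightarrow> bool" where
  "ideal_term ar \<Sigma> z p \<longleftrightarrow> (case p of (t, Y) \<Rightarrow>
     wf_trm ar t \<and> deriv ar \<Sigma> (subst (\<lambda>v. if v \<in> Y then z else Var v) t) z)"

definition closed_under :: "'a set \<Rightarrow> ('f \<Rightarrow> 'a list \<Rightarrow> 'a) \<Rightarrow> 'a set \<Rightarrow>
    ('f, nat) trm \<times> nat set \<Rightarrow> bool" where
  "closed_under A I H p \<longleftrightarrow> (case p of (t, Y) \<Rightarrow>
     (\<forall>\<rho>. (\<forall>v. \<rho> v \<in> A) \<longrightarrow> (\<forall>v\<in>Y. \<rho> v \<in> H) \<longrightarrow> eval I \<rho> t \<in> H))"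

definition is_ideal :: "('f \<Rightarrow> nat) \<Rightarrow> 'f identity set \<Rightarrow> ('f, nat) trm \<Rightarrow>
    'a set \<Rightarrow> ('f \<Rightarrow> 'a list \<Rightarrow> 'a) \<Rightarrow> 'a set \<Rightarrow> bool" where
  "is_ideal ar \<Sigma> z A I H \<longleftrightarrow> H \<noteq> {} \<and> H \<subseteq> A \<and>
     (\<forall>p. ideal_term ar \<Sigma> z p \<longrightarrow> closed_under A I H p)"

text \<open>T determines ideals in the variety defined by \<Sigma> (for all its algebras with
  carrier in type 'a).\<close>
definition determines_ideals :: "('f \<Rightarrow> nat) \<Rightarrow> 'f identity set \<Rightarrow> ('f, nat) trm \<Rightarrow>
    (('f, nat) trm \<times> nat set) set \<Rightarrow> 'a itself \<Rightarrow> bool" where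
  "determines_ideals ar \<Sigma> z T (_ :: 'a itself) \<longleftrightarrow>
     (\<forall>p\<in>T. ideal_term ar \<Sigma> z p) \<and>
     (\<forall>(A :: 'a set) I. var_alg ar \<Sigma> A I \<longrightarrow>
        (\<forall>H. H \<noteq> {} \<and> H \<subseteq> A \<longrightarrow>
           (is_ideal ar \<Sigma> z A I H \<longleftrightarrow> (\<forall>p\<in>T. closed_under A I H p))))"

end

theory Submission
  imports Defs
begin

text \<open>Let \<open>t(x, y)\<close> be an ideal term of the subvariety \<open>\<V>'\<close> and \<open>H\<close> an ideal, in the sense of
  \<open>\<V>\<close>, of an algebra \<open>A \<in> \<V>'\<close>. For \<open>a \<in> A\<close>, \<open>b \<in> H\<close> put \<open>u = t(a, b)\<close>; then \<open>t(a, 0) = 0\<close> in \<open>A\<close>.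
  Each \<open>\<alpha>\<^sub>i(t(x, y), t(x, 0))\<close> is an ideal term of \<open>\<V>\<close>, because it becomes
  \<open>\<alpha>\<^sub>i(t(x, 0), t(x, 0)) = 0\<close> at \<open>y = 0\<close>; so \<open>h\<^sub>i = \<alpha>\<^sub>i(u, 0) \<in> H\<close>. Likewise
  \<open>\<theta>(y\<^sub>1, \<dots>, y\<^sub>n, 0)\<close> is an ideal term of \<open>\<V>\<close>, hence \<open>u = \<theta>(h\<^sub>1, \<dots>, h\<^sub>n, 0) \<in> H\<close>.
  Thus the ideals of \<open>A\<close> are the same for \<open>\<V>\<close> and \<open>\<V>'\<close>, and so are the sets of ideal terms
  that determine them.\<close>

abbreviation zero_out :: "('f, nat) trm \<Rightarrow> nat set \<Rightarrow> nat \<Rightarrow> ('f, nat) trm" where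
  "zero_out z Y \<equiv> \<lambda>v. if v \<in> Y then z else Var v"

lemma eval_subst: "eval I \<rho> (subst \<sigma> t) = eval I (\<lambda>v. eval I \<rho> (\<sigma> v)) t"
  by (induct t) (auto cong: map_cong)

lemma subst_subst: "subst \<tau> (subst \<sigma> t) = subst (\<lambda>v. subst \<tau> (\<sigma> v)) t"
  by (induct t) (auto cong: map_cong)

lemma subst_cong_vars: "(\<forall>v\<in>vars_trm t. \<sigma> v = \<tau> v) \<Longrightarrow> subst \<sigma> t = subst \<tau> t"
  by (induct t) (auto cong: map_cong)

lemma eval_cong_vars: "(\<forall>v\<in>vars_trm t. \<rho> v = \<rho>' v) \<Longrightarrow> eval I \<rho> t = eval I \<rho>' t"
  by (induct t) (auto cong: map_cong)

lemma subst_ground: "vars_trm z = {} \<Longrightarrow> subst \<sigma> z = z"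
  by (induct z) (auto intro: map_idI)

lemma eval_ground: "vars_trm z = {} \<Longrightarrow> eval I \<rho> z = eval I \<rho>' z"
  by (rule eval_cong_vars) simp

lemma subst_zero_out_idem:
  "vars_trm z = {} \<Longrightarrow> subst (zero_out z Y) (subst (zero_out z Y) t) = subst (zero_out z Y) t"
  unfolding subst_subst by (rule subst_cong_vars) (simp add: subst_ground)

lemma wf_subst: "wf_trm ar t \<Longrightarrow> (\<forall>v. wf_trm ar (\<sigma> v)) \<Longrightarrow> wf_trm ar (subst \<sigma> t)"
  by (induct t) auto

lemma eval_in_carrier:
  "is_alg ar A I \<Longrightarrow> wf_trm ar t \<Longrightarrow> (\<forall>v. \<rho> v \<in> A) \<Longrightarrow> eval I \<rho> t \<in> A"
proof (induct t)
  case (Var x)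
  then show ?case by simp
next
  case (Fn f ts)
  then have "set (map (eval I \<rho>) ts) \<subseteq> A" by auto
  with Fn show ?case unfolding is_alg_def by simp
qed

lemma deriv_mono: "deriv ar \<Sigma> s t \<Longrightarrow> \<Sigma> \<subseteq> \<Sigma>' \<Longrightarrow> deriv ar \<Sigma>' s t"
proof (induct rule: deriv.induct)
  case (ax s t \<sigma>)
  then show ?case by (auto intro: deriv.ax)
next
  case (refl t)
  show ?case by (rule deriv.refl)
next
  case (sym s t)
  then show ?case by (auto intro: deriv.sym)
next
  case (trans s u t)
  then show ?case by (auto intro: deriv.trans)
next
  case (cong ss ts f)
  then show ?case by (auto intro!: deriv.cong elim: list_all2_mono)
qed

lemma deriv_sound:
  assumes "deriv ar \<Sigma> s t" and "var_alg ar \<Sigma> A I" and "\<forall>v. \<rho> v \<in> A"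
  shows "eval I \<rho> s = eval I \<rho> t"
  using assms
proof (induct arbitrary: \<rho> rule: deriv.induct)
  case (ax s t \<sigma>)
  then have "\<forall>v. eval I \<rho> (\<sigma> v) \<in> A"
    using eval_in_carrier unfolding var_alg_def by blast
  with ax show ?case unfolding var_alg_def eval_subst by fastforce
next
  case (cong ss ts f)
  then have "map (eval I \<rho>) ss = map (eval I \<rho>) ts"
    by (induct ss ts rule: list_all2_induct) auto
  then show ?case by simp
qed simp_all

lemma deriv_subst:
  assumes "deriv ar \<Sigma> s t" and "\<forall>v. wf_trm ar (\<tau> v)"
  shows "deriv ar \<Sigma> (subst \<tau> s) (subst \<tau> t)"
  using assms
proof (induct rule: deriv.induct)
  case (ax s t \<sigma>)
  then have "deriv ar \<Sigma> (subst (\<lambda>v. subst \<tau> (\<sigma> v)) s) (subst (\<lambda>v. subst \<tau> (\<sigma> v)) t)"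
    by (intro deriv.ax) (auto intro: wf_subst)
  then show ?case by (simp add: subst_subst)
next
  case (cong ss ts f)
  then have "list_all2 (deriv ar \<Sigma>) (map (subst \<tau>) ss) (map (subst \<tau>) ts)"
    by (induct ss ts rule: list_all2_induct) auto
  then show ?case by (auto intro: deriv.cong)
qed (blast intro: deriv.refl deriv.sym deriv.trans)+

lemma deriv_subst_cong:
  "(\<forall>v. deriv ar \<Sigma> (\<sigma> v) (\<tau> v)) \<Longrightarrow> deriv ar \<Sigma> (subst \<sigma> t) (subst \<tau> t)"
proof (induct t)
  case (Fn f ts)
  then have "list_all2 (deriv ar \<Sigma>) (map (subst \<sigma>) ts) (map (subst \<tau>) ts)"
    by (simp add: list_all2_map1 list_all2_map2 list.rel_refl_strong)
  then show ?case by (auto intro: deriv.cong)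
qed simp

lemma deriv_subst_const:
  assumes "deriv ar \<Sigma> (subst (\<lambda>_. Var 0) s) z" and "vars_trm z = {}" and "wf_trm ar u"
  shows "deriv ar \<Sigma> (subst (\<lambda>_. u) s) z"
  using deriv_subst[OF assms(1), of "\<lambda>_. u"] assms(2,3) by (simp add: subst_subst subst_ground)

lemma var_alg_mono: "var_alg ar \<Sigma>' A I \<Longrightarrow> \<Sigma> \<subseteq> \<Sigma>' \<Longrightarrow> var_alg ar \<Sigma> A I"
  unfolding var_alg_def by blast

lemma ideal_term_mono: "ideal_term ar \<Sigma> z p \<Longrightarrow> \<Sigma> \<subseteq> \<Sigma>' \<Longrightarrow> ideal_term ar \<Sigma>' z p"
  unfolding ideal_term_def by (auto split: prod.splits intro: deriv_mono)

lemma BIT_specialeE: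
  assumes "BIT_speciale ar \<Sigma> z"
  obtains n :: nat and \<alpha> :: "nat \<Rightarrow> ('f, nat) trm" and \<theta> :: "('f, nat) trm"
  where "wf_trm ar z" and "vars_trm z = {}"
    and "\<forall>i<n. wf_trm ar (\<alpha> i)" and "wf_trm ar \<theta>"
    and "\<forall>i<n. deriv ar \<Sigma> (subst (\<lambda>_. Var 0) (\<alpha> i)) z"
    and "deriv ar \<Sigma> (subst (\<lambda>j. if j < n then \<alpha> j else Var 1) \<theta>) (Var 0)"
  using assms unfolding BIT_speciale_def by (elim conjE exE, intro that) auto

lemma ideal_term_diagonal_zero:
  assumes "wf_trm ar \<alpha>" and "deriv ar \<Sigma> (subst (\<lambda>_. Var 0) \<alpha>) z"
    and "wf_trm ar z" and "vars_trm z = {}" and "wf_trm ar t"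
  shows "ideal_term ar \<Sigma> z (subst (\<lambda>v. if v = 0 then t else subst (zero_out z Y) t) \<alpha>, Y)"
proof -
  let ?t0 = "subst (zero_out z Y) t"
  have wf_t0: "wf_trm ar ?t0" using assms(3,5) by (simp add: wf_subst)
  have "subst (zero_out z Y) (subst (\<lambda>v. if v = 0 then t else ?t0) \<alpha>) = subst (\<lambda>_. ?t0) \<alpha>"
    unfolding subst_subst by (rule subst_cong_vars) (simp add: subst_zero_out_idem assms(4))
  moreover have "deriv ar \<Sigma> (subst (\<lambda>_. ?t0) \<alpha>) z"
    using assms(2,4) wf_t0 by (rule deriv_subst_const)
  ultimately show ?thesis
    unfolding ideal_term_def using assms(1,5) wf_t0 by (simp add: wf_subst)
qed

lemma ideal_term_recovery_at_zero:
  assumes "\<forall>i<n. deriv ar \<Sigma> (subst (\<lambda>_. Var 0) (\<alpha> i)) z"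
    and "deriv ar \<Sigma> (subst (\<lambda>j. if j < n then \<alpha> j else Var 1) \<theta>) (Var 0)"
    and "wf_trm ar \<theta>" and "wf_trm ar z" and "vars_trm z = {}"
  shows "ideal_term ar \<Sigma> z (subst (\<lambda>j. if j < n then Var j else z) \<theta>, {..<n})"
proof -
  have "subst (zero_out z {..<n}) (subst (\<lambda>j. if j < n then Var j else z) \<theta>) = subst (\<lambda>_. z) \<theta>"
    unfolding subst_subst by (rule subst_cong_vars) (simp add: subst_ground assms(5))
  moreover have "deriv ar \<Sigma> (subst (\<lambda>_. z) \<theta>) z"
  proof -
    have "deriv ar \<Sigma> (subst (\<lambda>_. z) (if j < n then \<alpha> j else Var 1)) z" for j
      by (cases "j < n") (simp_all add: deriv_subst_const assms(1,4,5) deriv.refl)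
    then have "deriv ar \<Sigma> (subst (\<lambda>_. z) \<theta>)
        (subst (\<lambda>j. subst (\<lambda>_. z) (if j < n then \<alpha> j else Var 1)) \<theta>)"
      by (blast intro: deriv.sym deriv_subst_cong)
    moreover have "deriv ar \<Sigma> (subst (\<lambda>j. subst (\<lambda>_. z) (if j < n then \<alpha> j else Var 1)) \<theta>) z"
      using deriv_subst[OF assms(2), of "\<lambda>_. z"] assms(4) by (simp add: subst_subst)
    ultimately show ?thesis by (rule deriv.trans)
  qed
  ultimately show ?thesis
    unfolding ideal_term_def using assms(3,4) by (simp add: wf_subst)
qed

lemma is_ideal_eval_in:
  assumes "is_ideal ar \<Sigma> z A I H" and "ideal_term ar \<Sigma> z (s, Y)"
    and "\<forall>v. \<rho> v \<in> A" and "\<forall>v\<in>Y. \<rho> v \<in> H"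
  shows "eval I \<rho> s \<in> H"
  using assms unfolding is_ideal_def closed_under_def by fastforce

lemma is_ideal_diagonal_zero_eval_in:
  assumes ideal: "is_ideal ar \<Sigma> z A I H" and alg: "var_alg ar \<Sigma>' A I"
    and t: "ideal_term ar \<Sigma>' z (t, Y)" and "wf_trm ar \<alpha>"
    and "deriv ar \<Sigma> (subst (\<lambda>_. Var 0) \<alpha>) z" and "wf_trm ar z" and "vars_trm z = {}"
    and \<rho>_A: "\<forall>v. \<rho> v \<in> A" and \<rho>_H: "\<forall>v\<in>Y. \<rho> v \<in> H"
  shows "eval I (\<lambda>v. if v = 0 then eval I \<rho> t else eval I \<rho> z) \<alpha> \<in> H"
proof -
  let ?s = "subst (\<lambda>v. if v = 0 then t else subst (zero_out z Y) t) \<alpha>"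
  have wf_t: "wf_trm ar t" and t_zero: "deriv ar \<Sigma>' (subst (zero_out z Y) t) z"
    using t unfolding ideal_term_def by auto
  have "ideal_term ar \<Sigma> z (?s, Y)"
    using assms(4-7) wf_t by (rule ideal_term_diagonal_zero)
  then have "eval I \<rho> ?s \<in> H" by (rule is_ideal_eval_in[OF ideal _ \<rho>_A \<rho>_H])
  moreover have "eval I \<rho> (subst (zero_out z Y) t) = eval I \<rho> z"
    using t_zero alg \<rho>_A by (rule deriv_sound)
  then have "eval I \<rho> ?s = eval I (\<lambda>v. if v = 0 then eval I \<rho> t else eval I \<rho> z) \<alpha>"
    unfolding eval_subst[of I \<rho> _ \<alpha>] by (intro eval_cong_vars) simp
  ultimately show ?thesis by simp
qed

lemma closed_under_subvariety_ideal_term: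
  assumes "\<Sigma> \<subseteq> \<Sigma>'" and "BIT_speciale ar \<Sigma> z"
    and alg: "var_alg ar \<Sigma>' A I" and ideal: "is_ideal ar \<Sigma> z A I H"
    and "ideal_term ar \<Sigma>' z (t, Y)"
  shows "closed_under A I H (t, Y)"
proof -
  obtain n :: nat and \<alpha> \<theta> where wf_z: "wf_trm ar z" and ground_z: "vars_trm z = {}"
    and wf_\<alpha>: "\<forall>i<n. wf_trm ar (\<alpha> i)" and wf_\<theta>: "wf_trm ar \<theta>"
    and \<alpha>_diag: "\<forall>i<n. deriv ar \<Sigma> (subst (\<lambda>_. Var 0) (\<alpha> i)) z"
    and \<theta>_\<alpha>: "deriv ar \<Sigma> (subst (\<lambda>j. if j < n then \<alpha> j else Var 1) \<theta>) (Var 0)"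
    using assms(2) by (rule BIT_specialeE)
  have carrier: "is_alg ar A I" using alg unfolding var_alg_def by blast
  have wf_t: "wf_trm ar t" using assms(5) unfolding ideal_term_def by simp
  show ?thesis unfolding closed_under_def prod.case
  proof (intro allI impI)
    fix \<rho> assume \<rho>_A: "\<forall>v. \<rho> v \<in> A" and \<rho>_H: "\<forall>v\<in>Y. \<rho> v \<in> H"
    define c where "c = eval I \<rho> z"
    have c_A: "c \<in> A" unfolding c_def using carrier wf_z \<rho>_A by (rule eval_in_carrier)
    define \<mu> where "\<mu> = (\<lambda>v::nat. if v = 0 then eval I \<rho> t else c)"
    have \<mu>_A: "\<forall>v. \<mu> v \<in> A"
      using c_A eval_in_carrier[OF carrier wf_t \<rho>_A] by (simp add: \<mu>_def)
    define h where "h = (\<lambda>j. if j < n then eval I \<mu> (\<alpha> j) else c)"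
    have h_H: "\<forall>j\<in>{..<n}. h j \<in> H"
      using is_ideal_diagonal_zero_eval_in[OF ideal alg assms(5) _ _ wf_z ground_z \<rho>_A \<rho>_H]
        wf_\<alpha> \<alpha>_diag unfolding h_def \<mu>_def c_def by auto
    have "\<forall>j. h j \<in> A" using h_H ideal c_A unfolding is_ideal_def h_def by auto
    with ideal_term_recovery_at_zero[OF \<alpha>_diag \<theta>_\<alpha> wf_\<theta> wf_z ground_z]
    have "eval I h (subst (\<lambda>j. if j < n then Var j else z) \<theta>) \<in> H"
      using ideal h_H by (blast intro: is_ideal_eval_in)
    also have "eval I h (subst (\<lambda>j. if j < n then Var j else z) \<theta>)
        = eval I \<mu> (subst (\<lambda>j. if j < n then \<alpha> j else Var 1) \<theta>)"
      unfolding eval_subst by (rule eval_cong_vars) (simp add: h_def \<mu>_def c_def eval_ground[OF ground_z])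
    also have "\<dots> = eval I \<rho> t"
      using deriv_sound[OF \<theta>_\<alpha> var_alg_mono[OF alg assms(1)] \<mu>_A] by (simp add: \<mu>_def)
    finally show "eval I \<rho> t \<in> H" .
  qed
qed

lemma is_ideal_subvariety_iff:
  assumes "\<Sigma> \<subseteq> \<Sigma>'" and "BIT_speciale ar \<Sigma> z" and "var_alg ar \<Sigma>' A I"
  shows "is_ideal ar \<Sigma>' z A I H \<longleftrightarrow> is_ideal ar \<Sigma> z A I H"
proof
  assume "is_ideal ar \<Sigma>' z A I H"
  then show "is_ideal ar \<Sigma> z A I H"
    unfolding is_ideal_def using ideal_term_mono[OF _ assms(1)] by blast
next
  assume ideal: "is_ideal ar \<Sigma> z A I H"
  have "closed_under A I H p" if "ideal_term ar \<Sigma>' z p" for p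
    using closed_under_subvariety_ideal_term[OF assms ideal] that by (cases p) blast
  with ideal show "is_ideal ar \<Sigma>' z A I H"
    unfolding is_ideal_def by blast
qed

theorem corollary2p10:
  fixes ar :: "'f \<Rightarrow> nat"
    and \<Sigma> \<Sigma>' :: "'f identity set"
    and z :: "('f, nat) trm"
    and T :: "(('f, nat) trm \<times> nat set) set"
  assumes "identities ar \<Sigma>" and "identities ar \<Sigma>'" and "\<Sigma> \<subseteq> \<Sigma>'"
    and "BIT_speciale ar \<Sigma> z"
    and "determines_ideals ar \<Sigma> z T TYPE('a)"
  shows "determines_ideals ar \<Sigma>' z T TYPE('a)"
proof -
  have T_ideal: "\<forall>p\<in>T. ideal_term ar \<Sigma> z p"
    and T_determines: "\<And>(A :: 'a set) I H. var_alg ar \<Sigma> A I \<Longrightarrow> H \<noteq> {} \<Longrightarrow> H \<subseteq> A \<Longrightarrow>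
      is_ideal ar \<Sigma> z A I H \<longleftrightarrow> (\<forall>p\<in>T. closed_under A I H p)"
    using assms(5) unfolding determines_ideals_def by blast+
  show ?thesis unfolding determines_ideals_def
  proof (intro conjI allI impI)
    show "\<forall>p\<in>T. ideal_term ar \<Sigma>' z p"
      using T_ideal ideal_term_mono assms(3) by blast
  next
    fix A :: "'a set" and I H
    assume alg: "var_alg ar \<Sigma>' A I" and H: "H \<noteq> {} \<and> H \<subseteq> A"
    show "is_ideal ar \<Sigma>' z A I H \<longleftrightarrow> (\<forall>p\<in>T. closed_under A I H p)"
      using is_ideal_subvariety_iff[OF assms(3,4) alg] T_determines[OF var_alg_mono[OF alg assms(3)]] H
      by blast
  qed
qed

end
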